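(* Let $\mathcal{C}_1,\dots,\mathcal{C}_D\subseteq\mathbb{F}_q^n$ be linear codes and $M\subseteq[n]^D$. Then $M$ is inner-generated for the code $\mathcal{C}_1\boxplus\cdots\boxplus\mathcal{C}_D$ if and only if $M$ is extendable in $\mathcal{C}_1^\perp\otimes\cdots\otimes\mathcal{C}_D^\perp$.
   Context: For $n,D\in\mathbb{N}$ and $i\in[D]$, $\mathcal{L}_i$ is the set of lines in $[n]^D$ parallel to the $i$-th axis (sets $A_1\times\cdots\times A_D$ with $A_i=[n]$, $|A_j|=1$ for $j\ne i$), and $\mathcal{L}=\bigcup_i\mathcal{L}_i$; a line in $\mathcal{L}_i$ is identified with $[n]$ via the $i$-th coordinate. For codes $\mathcal{B}_1,\dots,\mathcal{B}_D\subseteq\mathbb{F}_q^n$, the product code is $\mathcal{B}_1\otimes\cdots\otimes\mathcal{B}_D=\{c\in\mathbb{F}_q^{[n]^D}: c|_\ell\in\mathcal{B}_i\ \forall i\in[D],\ \forall \ell\in\mathcal{L}_i\}$; $\mathcal{B}^{(i)}=\{c: c|_\ell\in\mathcal{B}_i\ \forall\ell\in\mathcal{L}_i\}$ and $\mathcal{B}_1\boxplus\cdots\boxplus\mathcal{B}_D=\sum_i\mathcal{B}^{(i)}$. For $\ell\in\mathcal{L}_i$ let $\mathcal{B}_\ell=\{c\in\mathbb{F}_q^{[n]^D}:\operatorname{supp}c\subseteq\ell,\ c|_\ell\in\mathcal{B}_i\}$. For $M\subseteq[n]^D$, $L(M)=\{\ell\in\mathcal{L}:\ell\subseteq M\}$.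 $M$ is inner-generated for $\mathcal{B}_1\boxplus\cdots\boxplus\mathcal{B}_D$ if every codeword $c$ of this code with $\operatorname{supp}c\subseteq M$ lies in $\sum_{\ell\in L(M)}\mathcal{B}_\ell$. $M$ is extendable for $\mathcal{B}_1\otimes\cdots\otimes\mathcal{B}_D$ if every $c_M\in\mathbb{F}_q^M$ with $c_M|_\ell\in\mathcal{B}_i$ for all $i\in[D]$ and $\ell\in L(M)\cap\mathcal{L}_i$ extends to some $c\in\mathcal{B}_1\otimes\cdots\otimes\mathcal{B}_D$ with $c|_M=c_M$. $\mathcal{C}^\perp$ is the dual code. *)

theory Defs
  imports Main "HOL-Library.Function_Algebras"
begin

text \<open>Conventions: the coordinate set [n] is a finite type 'n (n = CARD('n)),
  the direction set [D] is a finite type 'd (D = CARD('d)), points of [n]^D are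
  functions 'd \<Rightarrow> 'n, words in F_q^{[n]^D} are functions ('d \<Rightarrow> 'n) \<Rightarrow> 'f,
  and words in F_q^n are functions 'n \<Rightarrow> 'f.\<close>

definition lin_code :: "('n \<Rightarrow> 'f::field) set \<Rightarrow> bool" where
  "lin_code C \<longleftrightarrow> (\<lambda>_. 0) \<in> C \<and> (\<forall>x\<in>C. \<forall>y\<in>C. (\<lambda>t. x t + y t) \<in> C)
     \<and> (\<forall>a. \<forall>x\<in>C. (\<lambda>t. a * x t) \<in> C)"

definition dual_code :: "('n::finite \<Rightarrow> 'f::field) set \<Rightarrow> ('n \<Rightarrow> 'f) set" where
  "dual_code C = {v. \<forall>c\<in>C. (\<Sum>t\<in>UNIV. v t * c t) = 0}"

definition line :: "'d \<Rightarrow> ('d \<Rightarrow> 'n) \<Rightarrow> ('d \<Rightarrow> 'n) set" where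
  "line i x = {y. \<forall>j. j \<noteq> i \<longrightarrow> y j = x j}"

definition lines :: "'d \<Rightarrow> ('d \<Rightarrow> 'n) set set" where
  "lines i = range (line i)"

definition restr :: "(('d \<Rightarrow> 'n) \<Rightarrow> 'f) \<Rightarrow> 'd \<Rightarrow> ('d \<Rightarrow> 'n) \<Rightarrow> ('n \<Rightarrow> 'f)" where
  "restr c i x = (\<lambda>t. c (x(i := t)))"

definition prod_code :: "('d \<Rightarrow> ('n \<Rightarrow> 'f) set) \<Rightarrow> (('d \<Rightarrow> 'n) \<Rightarrow> 'f) set" where
  "prod_code C = {c. \<forall>i. \<forall>L\<in>lines i. \<forall>x\<in>L. restr c i x \<in> C i}"

definition dir_code :: "('d \<Rightarrow> ('n \<Rightarrow> 'f) set) \<Rightarrow> 'd \<Rightarrow> (('d \<Rightarrow> 'n) \<Rightarrow> 'f) set" where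
  "dir_code C i = {c. \<forall>L\<in>lines i. \<forall>x\<in>L. restr c i x \<in> C i}"

definition boxplus_code ::
  "('d::finite \<Rightarrow> ('n \<Rightarrow> 'f::field) set) \<Rightarrow> (('d \<Rightarrow> 'n) \<Rightarrow> 'f) set" where
  "boxplus_code C = {(\<Sum>i\<in>UNIV. f i) | f. \<forall>i. f i \<in> dir_code C i}"

definition line_code ::
  "('d \<Rightarrow> ('n \<Rightarrow> 'f::zero) set) \<Rightarrow> 'd \<Rightarrow> ('d \<Rightarrow> 'n) set \<Rightarrow> (('d \<Rightarrow> 'n) \<Rightarrow> 'f) set" where
  "line_code C i L = {c. (\<forall>y. y \<notin> L \<longrightarrow> c y = 0) \<and> (\<forall>x\<in>L. restr c i x \<in> C i)}"

definition lines_in :: "('d \<Rightarrow> 'n) set \<Rightarrow> ('d \<times> ('d \<Rightarrow> 'n) set) set" where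
  "lines_in M = {(i, L). L \<in> lines i \<and> L \<subseteq> M}"

definition inner_span ::
  "('d::finite \<Rightarrow> ('n::finite \<Rightarrow> 'f::field) set) \<Rightarrow> ('d \<Rightarrow> 'n) set \<Rightarrow> (('d \<Rightarrow> 'n) \<Rightarrow> 'f) set" where
  "inner_span C M = {(\<Sum>p\<in>lines_in M. g p) | g. \<forall>p\<in>lines_in M. g p \<in> line_code C (fst p) (snd p)}"

definition inner_generated ::
  "('d::finite \<Rightarrow> ('n::finite \<Rightarrow> 'f::field) set) \<Rightarrow> ('d \<Rightarrow> 'n) set \<Rightarrow> bool" where
  "inner_generated C M \<longleftrightarrow>
     (\<forall>c\<in>boxplus_code C. {y. c y \<noteq> 0} \<subseteq> M \<longrightarrow> c \<in> inner_span C M)"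

text \<open>A partial word c_M on M is represented by a total function whose values outside M
  are irrelevant.\<close>
definition extendable ::
  "('d::finite \<Rightarrow> ('n::finite \<Rightarrow> 'f::field) set) \<Rightarrow> ('d \<Rightarrow> 'n) set \<Rightarrow> bool" where
  "extendable C M \<longleftrightarrow>
     (\<forall>cM :: ('d \<Rightarrow> 'n) \<Rightarrow> 'f.
        (\<forall>(i, L)\<in>lines_in M. \<forall>x\<in>L. restr cM i x \<in> C i) \<longrightarrow>
        (\<exists>c\<in>prod_code C. \<forall>y\<in>M. c y = cM y))"

end

theory Submission
  imports Defs "HOL.Vector_Spaces"
begin

(* Write B for C_1 [+] ... [+] C_D, V_M for the words supported in M and S for the sum of the
   line codes B_l over the lines l inside M, all in F_q^([n]^D) with the standard bilinear form.
   Both B and S are sums of codes whose duals are cut out line by line: the dual of B is the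
   product code of the C_i^perp, and the dual of S consists exactly of the words satisfying the
   local constraints in the definition of extendability.  Inner generation says that
   B cap V_M is contained in S.  Since T^perp^perp = T for every subspace T, this is equivalent
   to S^perp being contained in (B cap V_M)^perp = B^perp + V_(M^c), i.e. to every locally
   admissible word agreeing on M with a word of the product code. *)

lemma sum_apply: "(sum f A) x = (\<Sum>a\<in>A. f a x)" for f :: "'a \<Rightarrow> 'b \<Rightarrow> 'c::comm_monoid_add"
  by (induct A rule: infinite_finite_induct) (simp_all add: plus_fun_def)

lemma linear_functional_eq_sum:
  fixes \<phi> :: "('x::finite \<Rightarrow> 'f::field) \<Rightarrow> 'f"
  assumes "Vector_Spaces.linear (\<lambda>c a t. c * a t) (*) \<phi>"
  shows "\<phi> a = (\<Sum>t\<in>UNIV. \<phi> (\<lambda>s. if s = t then 1 else 0) * a t)"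
proof -
  interpret \<phi>: Vector_Spaces.linear "\<lambda>c a t. c * a t" "(*) :: 'f \<Rightarrow> 'f \<Rightarrow> 'f" \<phi> by fact
  have "a = (\<Sum>t\<in>UNIV. (\<lambda>s. a t * (if s = t then 1 else 0)))"
    by (rule ext) (simp add: sum_apply if_distrib cong: if_cong)
  then have "\<phi> a = (\<Sum>t\<in>UNIV. \<phi> (\<lambda>s. a t * (if s = t then 1 else 0)))"
    by (metis \<phi>.sum)
  then show ?thesis
    by (simp add: \<phi>.scale mult.commute)
qed

lemma dual_code_separates:
  fixes S :: "('x::finite \<Rightarrow> 'f::field) set"
  assumes S: "lin_code S" and v: "v \<notin> S"
  shows "\<exists>w\<in>dual_code S. (\<Sum>t\<in>UNIV. w t * v t) \<noteq> 0"
proof -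
  define sc where "sc = (\<lambda>(c::'f) (a::'x \<Rightarrow> 'f) t. c * a t)"
  interpret V: vector_space sc
    by unfold_locales (auto simp: sc_def fun_eq_iff plus_fun_def algebra_simps)
  interpret F: vector_space "(*) :: 'f \<Rightarrow> 'f \<Rightarrow> 'f"
    by unfold_locales (auto simp: algebra_simps)
  interpret VF: vector_space_pair sc "(*) :: 'f \<Rightarrow> 'f \<Rightarrow> 'f" ..
  have "V.subspace S"
    unfolding V.subspace_def using S by (auto simp: lin_code_def sc_def plus_fun_def zero_fun_def)
  then have span_S: "V.span S = S"
    by (simp add: V.span_eq_iff)
  obtain B where B: "B \<subseteq> S" "V.independent B" "S \<subseteq> V.span B"
    using V.maximal_independent_subset by blast
  have v_B: "v \<notin> V.span B"
    using B(1) span_S V.span_mono v by blast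
  have indep: "V.independent (insert v B)"
    using V.independent_insertI[OF v_B B(2)] .
  define \<phi> where "\<phi> = VF.construct (insert v B) (\<lambda>b. if b = v then 1 else 0)"
  have lin: "Vector_Spaces.linear sc (*) \<phi>"
    unfolding \<phi>_def using VF.linear_construct[OF indep] by blast
  have \<phi>_v: "\<phi> v = 1"
    unfolding \<phi>_def using VF.construct_basis[OF indep] by simp
  have \<phi>_B: "\<phi> b = 0" if "b \<in> B" for b
    unfolding \<phi>_def using VF.construct_basis[OF indep] that v_B V.span_base by fastforce
  have lin0: "Vector_Spaces.linear sc (*) (\<lambda>_. 0::'f)"
    by (simp add: linear_iff sc_def V.vector_space_axioms[unfolded sc_def] F.vector_space_axioms)
  have \<phi>_S: "\<phi> s = 0" if "s \<in> S" for s
    using VF.linear_eq_on[OF lin lin0, of s B] \<phi>_B B(3) that by blast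
  define w where "w t = \<phi> (\<lambda>s. if s = t then 1 else 0)" for t
  have \<phi>_eq: "\<phi> a = (\<Sum>t\<in>UNIV. w t * a t)" for a
    unfolding w_def using linear_functional_eq_sum lin sc_def by blast
  have "w \<in> dual_code S"
    using \<phi>_S by (simp add: dual_code_def \<phi>_eq)
  moreover have "(\<Sum>t\<in>UNIV. w t * v t) \<noteq> 0"
    using \<phi>_v by (simp add: \<phi>_eq)
  ultimately show ?thesis by blast
qed

lemma dual_code_dual_code:
  fixes S :: "('x::finite \<Rightarrow> 'f::field) set"
  assumes "lin_code S"
  shows "dual_code (dual_code S) = S"
proof
  show "S \<subseteq> dual_code (dual_code S)"
    by (auto simp: dual_code_def mult.commute)
  show "dual_code (dual_code S) \<subseteq> S"
  proof
    fix v assume "v \<in> dual_code (dual_code S)"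
    then show "v \<in> S"
      using dual_code_separates[OF assms, of v] by (force simp: dual_code_def mult.commute)
  qed
qed

lemma dual_code_antimono: "A \<subseteq> B \<Longrightarrow> dual_code B \<subseteq> dual_code A"
  by (auto simp: dual_code_def)

lemma lin_code_dual_code: "lin_code (dual_code (C :: ('x::finite \<Rightarrow> 'f::field) set))"
  unfolding lin_code_def dual_code_def
  by (auto simp: distrib_right sum.distrib mult.assoc sum_distrib_left[symmetric])

lemma lin_code_agree_on:
  assumes "lin_code C"
  shows "lin_code {s. \<exists>c\<in>C. \<forall>y\<in>M. s y = c y}"
  unfolding lin_code_def
proof (intro conjI ballI allI)
  show "(\<lambda>_. 0) \<in> {s. \<exists>c\<in>C. \<forall>y\<in>M. s y = c y}"
    using assms by (auto simp: lin_code_def)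
next
  fix a b assume "a \<in> {s. \<exists>c\<in>C. \<forall>y\<in>M. s y = c y}" "b \<in> {s. \<exists>c\<in>C. \<forall>y\<in>M. s y = c y}"
  then obtain c d where "c \<in> C" "d \<in> C" "\<forall>y\<in>M. a y = c y" "\<forall>y\<in>M. b y = d y"
    by blast
  then show "(\<lambda>t. a t + b t) \<in> {s. \<exists>c\<in>C. \<forall>y\<in>M. s y = c y}"
    using assms by (intro CollectI bexI[of _ "\<lambda>t. c t + d t"]) (auto simp: lin_code_def)
next
  fix k a assume "a \<in> {s. \<exists>c\<in>C. \<forall>y\<in>M. s y = c y}"
  then obtain c where "c \<in> C" "\<forall>y\<in>M. a y = c y"
    by blast
  then show "(\<lambda>t. k * a t) \<in> {s. \<exists>c\<in>C. \<forall>y\<in>M. s y = c y}"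
    using assms by (intro CollectI bexI[of _ "\<lambda>t. k * c t"]) (auto simp: lin_code_def)
qed

lemma dual_code_agree_on_dual_code:
  fixes B :: "('x::finite \<Rightarrow> 'f::field) set"
  assumes B: "lin_code B" and w: "w \<in> dual_code {s. \<exists>c\<in>dual_code B. \<forall>y\<in>M. s y = c y}"
  shows "w \<in> B" and "{y. w y \<noteq> 0} \<subseteq> M"
proof -
  have "dual_code B \<subseteq> {s. \<exists>c\<in>dual_code B. \<forall>y\<in>M. s y = c y}"
    by blast
  then have "w \<in> dual_code (dual_code B)"
    using w dual_code_antimono by blast
  then show "w \<in> B"
    using dual_code_dual_code[OF B] by simp
  have "w y = 0" if "y \<notin> M" for y
  proof -
    have "(\<lambda>s. if s = y then 1 else 0) \<in> {s. \<exists>c\<in>dual_code B. \<forall>y\<in>M. s y = c y}"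
      using that lin_code_dual_code[of B]
      by (intro CollectI bexI[of _ "\<lambda>_. 0"]) (auto simp: lin_code_def)
    then have "(\<Sum>t\<in>UNIV. w t * (if t = y then 1 else 0)) = 0"
      using w by (simp add: dual_code_def)
    then show "w y = 0"
      by (simp add: if_distrib cong: if_cong)
  qed
  then show "{y. w y \<noteq> 0} \<subseteq> M"
    by blast
qed

lemma supported_subset_iff_dual_extends:
  fixes B S :: "('x::finite \<Rightarrow> 'f::field) set"
  assumes B: "lin_code B" and S: "lin_code S"
  shows "(\<forall>w\<in>B. {y. w y \<noteq> 0} \<subseteq> M \<longrightarrow> w \<in> S) \<longleftrightarrow>
         (\<forall>u\<in>dual_code S. \<exists>c\<in>dual_code B. \<forall>y\<in>M. c y = u y)"
proof
  assume supported: "\<forall>w\<in>B. {y. w y \<noteq> 0} \<subseteq> M \<longrightarrow> w \<in> S"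
  define T where "T = {s. \<exists>c\<in>dual_code B. \<forall>y\<in>M. s y = c y}"
  have "dual_code T \<subseteq> S"
    using supported dual_code_agree_on_dual_code[OF B] unfolding T_def by blast
  then have "dual_code S \<subseteq> dual_code (dual_code T)"
    by (rule dual_code_antimono)
  also have "\<dots> = T"
    unfolding T_def using lin_code_dual_code by (intro dual_code_dual_code lin_code_agree_on)
  finally show "\<forall>u\<in>dual_code S. \<exists>c\<in>dual_code B. \<forall>y\<in>M. c y = u y"
    unfolding T_def by force
next
  assume extends: "\<forall>u\<in>dual_code S. \<exists>c\<in>dual_code B. \<forall>y\<in>M. c y = u y"
  show "\<forall>w\<in>B. {y. w y \<noteq> 0} \<subseteq> M \<longrightarrow> w \<in> S"
  proof (intro ballI impI)
    fix w assume w: "w \<in> B" "{y. w y \<noteq> 0} \<subseteq> M"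
    have "w \<in> dual_code (dual_code S)"
      unfolding dual_code_def[of "dual_code S"]
    proof (intro CollectI ballI)
      fix u assume "u \<in> dual_code S"
      then obtain c where c: "c \<in> dual_code B" "\<forall>y\<in>M. c y = u y"
        using extends by blast
      have "(\<Sum>t\<in>UNIV. w t * u t) = (\<Sum>t\<in>UNIV. c t * w t)"
        using w(2) c(2) by (intro sum.cong) (auto simp: mult.commute)
      also have "\<dots> = 0"
        using c(1) w(1) by (simp add: dual_code_def)
      finally show "(\<Sum>t\<in>UNIV. w t * u t) = 0" .
    qed
    then show "w \<in> S"
      using dual_code_dual_code[OF S] by simp
  qed
qed

definition code_sum :: "'i set \<Rightarrow> ('i \<Rightarrow> ('x \<Rightarrow> 'f::comm_monoid_add) set) \<Rightarrow> ('x \<Rightarrow> 'f) set" where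
  "code_sum I A = {(\<Sum>i\<in>I. f i) | f. \<forall>i\<in>I. f i \<in> A i}"

lemma lin_code_code_sum:
  fixes A :: "'i \<Rightarrow> ('x \<Rightarrow> 'f::field) set"
  assumes "\<forall>i\<in>I. lin_code (A i)"
  shows "lin_code (code_sum I A)"
  unfolding lin_code_def
proof (intro conjI ballI allI)
  show "(\<lambda>_. 0) \<in> code_sum I A"
    unfolding code_sum_def using assms
    by (intro CollectI exI[of _ "\<lambda>i _. 0"]) (auto simp: lin_code_def sum_apply)
next
  fix a b assume "a \<in> code_sum I A" "b \<in> code_sum I A"
  then obtain f g where "\<forall>i\<in>I. f i \<in> A i" "a = (\<Sum>i\<in>I. f i)" "\<forall>i\<in>I. g i \<in> A i" "b = (\<Sum>i\<in>I. g i)"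
    unfolding code_sum_def by blast
  then show "(\<lambda>t. a t + b t) \<in> code_sum I A"
    unfolding code_sum_def using assms
    by (intro CollectI exI[of _ "\<lambda>i t. f i t + g i t"]) (auto simp: lin_code_def sum_apply sum.distrib)
next
  fix k a assume "a \<in> code_sum I A"
  then obtain f where "\<forall>i\<in>I. f i \<in> A i" "a = (\<Sum>i\<in>I. f i)"
    unfolding code_sum_def by blast
  then show "(\<lambda>t. k * a t) \<in> code_sum I A"
    unfolding code_sum_def using assms
    by (intro CollectI exI[of _ "\<lambda>i t. k * f i t"]) (auto simp: lin_code_def sum_apply sum_distrib_left)
qed

lemma mem_code_sum:
  fixes A :: "'i \<Rightarrow> ('x \<Rightarrow> 'f::field) set"
  assumes "finite I" "\<forall>j\<in>I. lin_code (A j)" "i \<in> I" "a \<in> A i"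
  shows "a \<in> code_sum I A"
proof -
  have "a = (\<Sum>j\<in>I. if j = i then a else 0)"
    using assms(1,3) by simp
  moreover have "\<forall>j\<in>I. (if j = i then a else 0) \<in> A j"
    using assms(2,4) by (auto simp: lin_code_def zero_fun_def)
  ultimately show ?thesis
    unfolding code_sum_def by blast
qed

lemma dual_code_code_sum:
  fixes A :: "'i \<Rightarrow> ('x::finite \<Rightarrow> 'f::field) set"
  assumes "finite I" "\<forall>i\<in>I. lin_code (A i)"
  shows "dual_code (code_sum I A) = (\<Inter>i\<in>I. dual_code (A i))"
proof
  show "dual_code (code_sum I A) \<subseteq> (\<Inter>i\<in>I. dual_code (A i))"
    using dual_code_antimono mem_code_sum[OF assms] by (metis INT_greatest subsetI)
  show "(\<Inter>i\<in>I. dual_code (A i)) \<subseteq> dual_code (code_sum I A)"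
  proof
    fix u assume u: "u \<in> (\<Inter>i\<in>I. dual_code (A i))"
    have "(\<Sum>t\<in>UNIV. u t * (\<Sum>i\<in>I. f i) t) = 0" if "\<forall>i\<in>I. f i \<in> A i" for f
    proof -
      have "(\<Sum>t\<in>UNIV. u t * (\<Sum>i\<in>I. f i) t) = (\<Sum>i\<in>I. \<Sum>t\<in>UNIV. u t * f i t)"
        by (simp add: sum_apply sum_distrib_left sum.swap[of _ UNIV])
      also have "\<dots> = 0"
        using u that by (simp add: dual_code_def)
      finally show ?thesis .
    qed
    then show "u \<in> dual_code (code_sum I A)"
      by (auto simp: dual_code_def code_sum_def)
  qed
qed

lemma line_self: "x \<in> line i x"
  by (simp add: line_def)

lemma line_eq: "y \<in> line i x \<Longrightarrow> line i y = line i x"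
  by (auto simp: line_def)

lemma line_eq_range_upd: "line i x = range (\<lambda>t. x(i := t))"
  by (auto simp: line_def fun_eq_iff)

lemma upd_mem_line_iff: "x'(i := t) \<in> line i x \<longleftrightarrow> x' \<in> line i x"
  by (simp add: line_def)

lemma restr_zero: "restr (\<lambda>_. 0) i x = (\<lambda>_. 0)"
  by (simp add: restr_def)

lemma restr_add: "restr (\<lambda>y. a y + b y) i x = (\<lambda>t. restr a i x t + restr b i x t)"
  by (simp add: restr_def)

lemma restr_scale: "restr (\<lambda>y. k * a y) i x = (\<lambda>t. k * restr a i x t)"
  by (simp add: restr_def)

lemma dir_code_iff: "c \<in> dir_code C i \<longleftrightarrow> (\<forall>x. restr c i x \<in> C i)"
  unfolding dir_code_def lines_def using line_self by fastforce

lemma prod_code_eq_Inter_dir_code: "prod_code C = (\<Inter>i. dir_code C i)"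
  by (auto simp: prod_code_def dir_code_def)

lemma lin_code_dir_code:
  assumes "lin_code (C i)"
  shows "lin_code (dir_code C i)"
  using assms by (auto simp: lin_code_def dir_code_iff restr_zero restr_add restr_scale)

lemma lin_code_line_code:
  assumes "lin_code (C i)"
  shows "lin_code (line_code C i L)"
  using assms by (auto simp: lin_code_def line_code_def restr_zero restr_add restr_scale)

lemma sum_supported_on_line:
  fixes g :: "('d \<Rightarrow> 'n::finite) \<Rightarrow> 'f::comm_monoid_add"
  assumes "finite (UNIV :: ('d \<Rightarrow> 'n) set)" "\<forall>y. y \<notin> line i x \<longrightarrow> g y = 0"
  shows "(\<Sum>y\<in>UNIV. g y) = (\<Sum>t\<in>UNIV. g (x(i := t)))"
proof -
  have "(\<Sum>y\<in>UNIV. g y) = (\<Sum>y\<in>line i x. g y)"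
    using assms by (intro sum.mono_neutral_right) auto
  also have "\<dots> = (\<Sum>t\<in>UNIV. g (x(i := t)))"
  proof -
    have "inj (\<lambda>t. x(i := t))"
      by (rule injI) (metis fun_upd_same)
    then show ?thesis
      unfolding line_eq_range_upd by (simp add: sum.reindex)
  qed
  finally show ?thesis .
qed

lemma sum_by_lines:
  fixes F :: "('d \<Rightarrow> 'n::finite) \<Rightarrow> 'f::comm_monoid_add"
  shows "(\<Sum>y\<in>UNIV. F y) = (\<Sum>x\<in>{x. x i = a}. \<Sum>t\<in>UNIV. F (x(i := t)))"
proof -
  have "bij_betw (\<lambda>(x, t). x(i := t)) ({x. x i = a} \<times> (UNIV :: 'n set)) UNIV"
    by (rule bij_betw_byWitness[where f'="\<lambda>y. (y(i := a), y i)"]) auto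
  then have "(\<Sum>y\<in>UNIV. F y) = (\<Sum>(x, t)\<in>{x. x i = a} \<times> UNIV. F (x(i := t)))"
    by (subst sum.reindex_bij_betw[symmetric]) (auto simp: case_prod_unfold)
  then show ?thesis
    by (simp add: sum.cartesian_product)
qed

definition on_line :: "'d \<Rightarrow> ('d \<Rightarrow> 'n) \<Rightarrow> ('n \<Rightarrow> 'f::zero) \<Rightarrow> ('d \<Rightarrow> 'n) \<Rightarrow> 'f" where
  "on_line i x c = (\<lambda>y. if y \<in> line i x then c (y i) else 0)"

lemma restr_on_line: "restr (on_line i x c) i x' = (if x' \<in> line i x then c else (\<lambda>_. 0))"
  by (simp add: restr_def on_line_def upd_mem_line_iff fun_eq_iff)

lemma on_line_outside: "y \<notin> line i x \<Longrightarrow> on_line i x c y = 0"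
  by (simp add: on_line_def)

lemma sum_mult_on_line:
  fixes u :: "('d::finite \<Rightarrow> 'n::finite) \<Rightarrow> 'f::field"
  shows "(\<Sum>y\<in>UNIV. u y * on_line i x c y) = (\<Sum>t\<in>UNIV. restr u i x t * c t)"
  by (subst sum_supported_on_line[where i=i and x=x]) (auto simp: on_line_def restr_def line_def)

lemma dual_line_code:
  fixes C :: "'d::finite \<Rightarrow> ('n::finite \<Rightarrow> 'f::field) set"
  assumes "L \<in> lines i"
  shows "dual_code (line_code C i L) = {u. \<forall>x\<in>L. restr u i x \<in> dual_code (C i)}"
proof
  show "dual_code (line_code C i L) \<subseteq> {u. \<forall>x\<in>L. restr u i x \<in> dual_code (C i)}"
  proof (intro subsetI CollectI ballI)
    fix u x assume u: "u \<in> dual_code (line_code C i L)" and "x \<in> L"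
    obtain x0 where "L = line i x0"
      using assms unfolding lines_def by blast
    with \<open>x \<in> L\<close> have L_eq: "L = line i x"
      using line_eq[of x i x0] by simp
    have "on_line i x c \<in> line_code C i L" if "c \<in> C i" for c
      using that by (simp add: line_code_def L_eq on_line_outside restr_on_line)
    then show "restr u i x \<in> dual_code (C i)"
      using u by (auto simp: dual_code_def simp flip: sum_mult_on_line)
  qed
  show "{u. \<forall>x\<in>L. restr u i x \<in> dual_code (C i)} \<subseteq> dual_code (line_code C i L)"
  proof (intro subsetI)
    fix u assume u: "u \<in> {u. \<forall>x\<in>L. restr u i x \<in> dual_code (C i)}"
    obtain x where L_eq: "L = line i x"
      using assms unfolding lines_def by blast
    have "(\<Sum>y\<in>UNIV. u y * f y) = 0" if f: "f \<in> line_code C i L" for f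
    proof -
      have "(\<Sum>y\<in>UNIV. u y * f y) = (\<Sum>t\<in>UNIV. restr u i x t * restr f i x t)"
        using f by (subst sum_supported_on_line[where i=i and x=x]) (auto simp: line_code_def L_eq restr_def)
      also have "\<dots> = 0"
        using u f line_self[of x i] by (auto simp: line_code_def L_eq dual_code_def)
      finally show ?thesis .
    qed
    then show "u \<in> dual_code (line_code C i L)"
      by (simp add: dual_code_def)
  qed
qed

lemma dual_dir_code:
  fixes C :: "'d::finite \<Rightarrow> ('n::finite \<Rightarrow> 'f::field) set"
  assumes "lin_code (C i)"
  shows "dual_code (dir_code C i) = dir_code (\<lambda>j. dual_code (C j)) i"
proof
  show "dual_code (dir_code C i) \<subseteq> dir_code (\<lambda>j. dual_code (C j)) i"
  proof (intro subsetI, unfold dir_code_iff, intro allI)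
    fix u x assume u: "u \<in> dual_code (dir_code C i)"
    have "on_line i x c \<in> dir_code C i" if "c \<in> C i" for c
      using that assms by (auto simp: dir_code_iff restr_on_line lin_code_def)
    then show "restr u i x \<in> dual_code (C i)"
      using u by (auto simp: dual_code_def simp flip: sum_mult_on_line)
  qed
  show "dir_code (\<lambda>j. dual_code (C j)) i \<subseteq> dual_code (dir_code C i)"
  proof (intro subsetI)
    fix u assume u: "u \<in> dir_code (\<lambda>j. dual_code (C j)) i"
    have "(\<Sum>y\<in>UNIV. u y * f y) = 0" if f: "f \<in> dir_code C i" for f
    proof -
      have "(\<Sum>t\<in>UNIV. u (x(i := t)) * f (x(i := t))) = 0" for x
        using u f by (auto simp: dir_code_iff dual_code_def restr_def)
      then show ?thesis
        by (simp add: sum_by_lines[of _ i undefined])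
    qed
    then show "u \<in> dual_code (dir_code C i)"
      by (simp add: dual_code_def)
  qed
qed

lemma boxplus_code_eq_code_sum: "boxplus_code C = code_sum UNIV (dir_code C)"
  by (simp add: boxplus_code_def code_sum_def)

lemma inner_span_eq_code_sum:
  "inner_span C M = code_sum (lines_in M) (\<lambda>p. line_code C (fst p) (snd p))"
  by (simp add: inner_span_def code_sum_def)

lemma dual_boxplus_code:
  fixes C :: "'d::finite \<Rightarrow> ('n::finite \<Rightarrow> 'f::field) set"
  assumes "\<forall>i. lin_code (C i)"
  shows "dual_code (boxplus_code C) = prod_code (\<lambda>i. dual_code (C i))"
  using assms by (simp add: boxplus_code_eq_code_sum dual_code_code_sum lin_code_dir_code
      dual_dir_code prod_code_eq_Inter_dir_code)

lemma dual_inner_span: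
  fixes C :: "'d::finite \<Rightarrow> ('n::finite \<Rightarrow> 'f::field) set"
  assumes "\<forall>i. lin_code (C i)"
  shows "dual_code (inner_span C M) =
         {u. \<forall>(i, L)\<in>lines_in M. \<forall>x\<in>L. restr u i x \<in> dual_code (C i)}"
  using assms by (auto simp: inner_span_eq_code_sum dual_code_code_sum lin_code_line_code
      dual_line_code lines_in_def)

theorem proposition1:
  fixes C :: "'d::finite \<Rightarrow> ('n::finite \<Rightarrow> 'f::{field,finite}) set"
    and M :: "('d \<Rightarrow> 'n) set"
  assumes "\<forall>i. lin_code (C i)"
  shows "inner_generated C M \<longleftrightarrow> extendable (\<lambda>i. dual_code (C i)) M"
proof -
  have lin_boxplus: "lin_code (boxplus_code C)"
    using assms by (simp add: boxplus_code_eq_code_sum lin_code_code_sum lin_code_dir_code)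
  have lin_inner: "lin_code (inner_span C M)"
    using assms by (simp add: inner_span_eq_code_sum lin_code_code_sum lin_code_line_code)
  have "inner_generated C M \<longleftrightarrow>
        (\<forall>u\<in>dual_code (inner_span C M). \<exists>c\<in>dual_code (boxplus_code C). \<forall>y\<in>M. c y = u y)"
    unfolding inner_generated_def by (rule supported_subset_iff_dual_extends[OF lin_boxplus lin_inner])
  also have "\<dots> \<longleftrightarrow> extendable (\<lambda>i. dual_code (C i)) M"
    unfolding extendable_def dual_boxplus_code[OF assms] dual_inner_span[OF assms] by blast
  finally show ?thesis .
qed

end
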